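(* Let $\Gamma$ be any set of FOML formulas and $\varphi$ any FOML formula (as defined in the context). If $\Gamma^{\mathrm{FOL}} \models_{\mathrm{FOL}} \varphi^{\mathrm{FOL}}$, then $\Gamma \models \varphi$.
   Context: FOML syntax. Fix pairwise disjoint, non-empty, denumerable sets $\mathcal{X}$ (rigid variables), $\mathcal{V}$ (flexible variables) and $\mathcal{O}$ (operator symbols, each with an arity in $\mathbb{N}$). Expressions are given by $e ::= x \mid v \mid op(e,\ldots,e) \mid e=e \mid \mathrm{FALSE} \mid e\Rightarrow e \mid \forall x: e \mid \nabla e$ with $x\in\mathcal{X}$, $v\in\mathcal{V}$, $op\in\mathcal{O}$ applied to as many arguments as its arity. There is no separation between terms and formulas; "formula" just means expression. Only rigid variables can be bound; free and bound variables are defined as usual. The usual connectives $\neg,\wedge,\vee,\equiv,\exists$ are defined as abbreviations. FOML semantics. A Kripke model is $\mathcal{M}=(\mathcal{I},\xi,\mathcal{W},R,\zeta,\nabla_\mathcal{M})$, where: - $\mathcal{I}$ is a first-order interpretation with universe $|\mathcal{I}|$ containing two distinct values $\mathsf{tt},\mathsf{ff}$, and $\mathcal{I}(op):|\mathcal{I}|^n\to|\mathcal{I}|$ for each $n$-ary $op$; - $\xi:\mathcal{X}\to|\mathcal{I}|$; - $\mathcal{W}$ is a non-empty set of states and $R\subseteq\mathcal{W}\times\mathcal{W}$; - $\zeta:\mathcal{V}\times\mathcal{W}\to|\mathcal{I}|$; - $\nabla_\mathcal{M}:2^{|\mathcal{I}|}\to|\mathcal{I}|$ satisfies $\nabla_\mathcal{M}(S)=\mathsf{tt}$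 iff $S\subseteq\{\mathsf{tt}\}$. The value $[\![e]\!]^\mathcal{M}_w$ at state $w$ is defined as follows. - $[\![x]\!]_w=\xi(x)$ and $[\![v]\!]_w=\zeta(v,w)$. - $[\![op(e_1,\ldots,e_n)]\!]_w=\mathcal{I}(op)([\![e_1]\!]_w,\ldots,[\![e_n]\!]_w)$. - $[\![e_1=e_2]\!]_w$ is $\mathsf{tt}$ if the two values are equal and $\mathsf{ff}$ otherwise. - $[\![\mathrm{FALSE}]\!]_w=\mathsf{ff}$. - $[\![\varphi\Rightarrow\psi]\!]_w=\mathsf{tt}$ if $[\![\varphi]\!]_w\neq\mathsf{tt}$ or $[\![\psi]\!]_w=\mathsf{tt}$, and $\mathsf{ff}$ otherwise. - $[\![\forall x:\varphi]\!]^\mathcal{M}_w=\mathsf{tt}$ if $[\![\varphi]\!]^{\mathcal{M}'}_w=\mathsf{tt}$ for every $\mathcal{M}'$ that differs from $\mathcal{M}$ only in the value $\xi(x)$, and $\mathsf{ff}$ otherwise. - $[\![\nabla\varphi]\!]_w=\nabla_\mathcal{M}(\{[\![\varphi]\!]_{w'}:(w,w')\in R\})$. Write $\mathcal{M},w\models\varphi$ for $[\![\varphi]\!]^\mathcal{M}_w=\mathsf{tt}$. The consequence relation is: $\Gamma\models\varphi$ iff for every Kripke model $\mathcal{M}$, if $\mathcal{M},w\models\psi$ for all $\psi\in\Gamma$ and all $w\in\mathcal{W}$, then $\mathcal{M},w\models\varphi$ for all $w\in\mathcal{W}$. FOL. First-order expressions are the expressions without $\nabla$. They are evaluated in first-order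 structures $(\mathcal{I},\xi)$ by the same clauses, with all variables treated as ordinary first-order variables. $\Gamma\models_{\mathrm{FOL}}\varphi$ means every first-order structure that makes every member of $\Gamma$ evaluate to $\mathsf{tt}$ makes $\varphi$ evaluate to $\mathsf{tt}$. Coalescing to FOL. Set $e^{\mathrm{FOL}}=(e^{\varepsilon})^{\mathrm{FOL}}$, where $\varepsilon$ is the empty list. For a list $\vec y$ of rigid variables, $(e^{\vec y})^{\mathrm{FOL}}$ is the first-order expression over the variable set $\mathcal{X}\cup\mathcal{V}$ (flexible variables becoming ordinary first-order variables) defined by: - $x\mapsto x$ and $v\mapsto v$; - $op(e_1,\ldots,e_n)\mapsto op((e_1^{\vec y})^{\mathrm{FOL}},\ldots,(e_n^{\vec y})^{\mathrm{FOL}})$; - $=$, $\mathrm{FALSE}$ and $\Rightarrow$ are translated homomorphically; - $(\forall x:e)^{\vec y}\mapsto\forall x:(e^{x,\vec y})^{\mathrm{FOL}}$; - $(\nabla e)^{\vec y}\mapsto[\lambda\vec z:\nabla e](\vec z)$, where $\vec z$ is the subsequence of $\vec y$ consisting of the rigid variables occurring free in $e$, and $[\lambda\vec z:\nabla e]$ is a fresh operator symbol of arity $|\vec z|$. Two such fresh symbols are identical exactly when their $\lambda$-expressions are $\alpha$-equivalent. For a set $\Gamma$, $\Gamma^{\mathrm{FOL}}=\{\psi^{\mathrm{FOL}}:\psi\in\Gamma\}$. *)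

theory Defs
  imports Main "HOL-Library.Countable" "HOL-Library.Infinite_Typeclass"
begin

text \<open>'x: rigid variables, 'v: flexible variables, 'o: operator symbols
  (arities given by a function ar :: 'o \<Rightarrow> nat).\<close>

datatype ('x, 'v, 'o) expr =
    RVar 'x
  | FVar 'v
  | Op 'o "('x, 'v, 'o) expr list"
  | Eq "('x, 'v, 'o) expr" "('x, 'v, 'o) expr"
  | FalseE
  | Imp "('x, 'v, 'o) expr" "('x, 'v, 'o) expr"
  | All 'x "('x, 'v, 'o) expr"
  | Nabla "('x, 'v, 'o) expr"

fun wf :: "('o \<Rightarrow> nat) \<Rightarrow> ('x, 'v, 'o) expr \<Rightarrow> bool" where
  "wf ar (RVar x) = True"
| "wf ar (FVar v) = True"
| "wf ar (Op f es) = (length es = ar f \<and> (\<forall>e\<in>set es. wf ar e))"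
| "wf ar (Eq a b) = (wf ar a \<and> wf ar b)"
| "wf ar FalseE = True"
| "wf ar (Imp a b) = (wf ar a \<and> wf ar b)"
| "wf ar (All x e) = wf ar e"
| "wf ar (Nabla e) = wf ar e"

fun frv :: "('x, 'v, 'o) expr \<Rightarrow> 'x set" where
  "frv (RVar x) = {x}"
| "frv (FVar v) = {}"
| "frv (Op f es) = (\<Union>e\<in>set es. frv e)"
| "frv (Eq a b) = frv a \<union> frv b"
| "frv FalseE = {}"
| "frv (Imp a b) = frv a \<union> frv b"
| "frv (All x e) = frv e - {x}"
| "frv (Nabla e) = frv e"

text \<open>A Kripke model with universe the type 'u and states of type 'w consists of
  tt, ff, the interpretation I of operators, the valuation xi of rigid variables,
  the state set W, the accessibility relation R, the valuation zeta of flexible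
  variables and the function nab (\<nabla>_M).\<close>

fun kval :: "'u \<Rightarrow> 'u \<Rightarrow> ('o \<Rightarrow> 'u list \<Rightarrow> 'u) \<Rightarrow> ('u set \<Rightarrow> 'u) \<Rightarrow> ('w \<times> 'w) set
    \<Rightarrow> ('x \<Rightarrow> 'u) \<Rightarrow> ('v \<Rightarrow> 'w \<Rightarrow> 'u) \<Rightarrow> 'w \<Rightarrow> ('x, 'v, 'o) expr \<Rightarrow> 'u" where
  "kval tt ff I nab R \<xi> \<zeta> w (RVar x) = \<xi> x"
| "kval tt ff I nab R \<xi> \<zeta> w (FVar v) = \<zeta> v w"
| "kval tt ff I nab R \<xi> \<zeta> w (Op f es) = I f (map (kval tt ff I nab R \<xi> \<zeta> w) es)"
| "kval tt ff I nab R \<xi> \<zeta> w (Eq a b) =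
     (if kval tt ff I nab R \<xi> \<zeta> w a = kval tt ff I nab R \<xi> \<zeta> w b then tt else ff)"
| "kval tt ff I nab R \<xi> \<zeta> w FalseE = ff"
| "kval tt ff I nab R \<xi> \<zeta> w (Imp a b) =
     (if kval tt ff I nab R \<xi> \<zeta> w a \<noteq> tt \<or> kval tt ff I nab R \<xi> \<zeta> w b = tt then tt else ff)"
| "kval tt ff I nab R \<xi> \<zeta> w (All x e) =
     (if \<forall>u. kval tt ff I nab R (\<xi>(x := u)) \<zeta> w e = tt then tt else ff)"
| "kval tt ff I nab R \<xi> \<zeta> w (Nabla e) =
     nab {kval tt ff I nab R \<xi> \<zeta> w' e | w'. (w, w') \<in> R}"

definition kripke_model :: "'u \<Rightarrow> 'u \<Rightarrow> ('u set \<Rightarrow> 'u) \<Rightarrow> 'w set \<Rightarrow> ('w \<times> 'w) set \<Rightarrow> bool" where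
  "kripke_model tt ff nab W R \<longleftrightarrow>
     tt \<noteq> ff \<and> W \<noteq> {} \<and> R \<subseteq> W \<times> W \<and> (\<forall>S. nab S = tt \<longleftrightarrow> S \<subseteq> {tt})"

definition kconseq :: "'u itself \<Rightarrow> 'w itself \<Rightarrow> ('x, 'v, 'o) expr set \<Rightarrow> ('x, 'v, 'o) expr \<Rightarrow> bool" where
  "kconseq _ _ \<Gamma> \<phi> \<longleftrightarrow>
     (\<forall>(tt::'u) ff I nab (W::'w set) R \<xi> \<zeta>. kripke_model tt ff nab W R \<longrightarrow>
        (\<forall>\<psi>\<in>\<Gamma>. \<forall>w\<in>W. kval tt ff I nab R \<xi> \<zeta> w \<psi> = tt) \<longrightarrow>
        (\<forall>w\<in>W. kval tt ff I nab R \<xi> \<zeta> w \<phi> = tt))"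

datatype ('a, 'f) fexpr =
    FV 'a
  | FOp 'f "('a, 'f) fexpr list"
  | FEq "('a, 'f) fexpr" "('a, 'f) fexpr"
  | FFalse
  | FImp "('a, 'f) fexpr" "('a, 'f) fexpr"
  | FAll 'a "('a, 'f) fexpr"

fun fval :: "'u \<Rightarrow> 'u \<Rightarrow> ('f \<Rightarrow> 'u list \<Rightarrow> 'u) \<Rightarrow> ('a \<Rightarrow> 'u) \<Rightarrow> ('a, 'f) fexpr \<Rightarrow> 'u" where
  "fval tt ff I \<sigma> (FV a) = \<sigma> a"
| "fval tt ff I \<sigma> (FOp f es) = I f (map (fval tt ff I \<sigma>) es)"
| "fval tt ff I \<sigma> (FEq a b) = (if fval tt ff I \<sigma> a = fval tt ff I \<sigma> b then tt else ff)"
| "fval tt ff I \<sigma> FFalse = ff"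
| "fval tt ff I \<sigma> (FImp a b) =
     (if fval tt ff I \<sigma> a \<noteq> tt \<or> fval tt ff I \<sigma> b = tt then tt else ff)"
| "fval tt ff I \<sigma> (FAll x e) = (if \<forall>u. fval tt ff I (\<sigma>(x := u)) e = tt then tt else ff)"

definition fol_conseq :: "'u itself \<Rightarrow> ('a, 'f) fexpr set \<Rightarrow> ('a, 'f) fexpr \<Rightarrow> bool" where
  "fol_conseq _ \<Gamma> \<phi> \<longleftrightarrow>
     (\<forall>(tt::'u) ff I \<sigma>. tt \<noteq> ff \<longrightarrow>
        (\<forall>\<psi>\<in>\<Gamma>. fval tt ff I \<sigma> \<psi> = tt) \<longrightarrow> fval tt ff I \<sigma> \<phi> = tt)"

text \<open>Nameless (de Bruijn) representation, used to identify lambda-expressions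
  up to alpha-equivalence.\<close>
datatype ('x, 'v, 'o) dexp =
    DBnd nat
  | DRig 'x
  | DFlx 'v
  | DOp 'o "('x, 'v, 'o) dexp list"
  | DEq "('x, 'v, 'o) dexp" "('x, 'v, 'o) dexp"
  | DFalse
  | DImp "('x, 'v, 'o) dexp" "('x, 'v, 'o) dexp"
  | DAll "('x, 'v, 'o) dexp"
  | DNab "('x, 'v, 'o) dexp"

fun idx :: "'x list \<Rightarrow> 'x \<Rightarrow> nat" where
  "idx [] x = 0"
| "idx (y # ys) x = (if x = y then 0 else Suc (idx ys x))"

text \<open>env lists the binders innermost first.\<close>
fun nameless :: "'x list \<Rightarrow> ('x, 'v, 'o) expr \<Rightarrow> ('x, 'v, 'o) dexp" where
  "nameless env (RVar x) = (if x \<in> set env then DBnd (idx env x) else DRig x)"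
| "nameless env (FVar v) = DFlx v"
| "nameless env (Op f es) = DOp f (map (nameless env) es)"
| "nameless env (Eq a b) = DEq (nameless env a) (nameless env b)"
| "nameless env FalseE = DFalse"
| "nameless env (Imp a b) = DImp (nameless env a) (nameless env b)"
| "nameless env (All x e) = DAll (nameless (x # env) e)"
| "nameless env (Nabla e) = DNab (nameless env e)"

text \<open>Operator symbols of the FOL side: original ones, and fresh symbols
  [\<lambda>z1..zn: \<nabla>e], represented by their arity n and the nameless form of \<nabla>e with
  z1..zn as outermost binders (so equal iff alpha-equivalent).\<close>
datatype ('x, 'v, 'o) fop = Orig 'o | Lam nat "('x, 'v, 'o) dexp"

definition lam_sym :: "'x list \<Rightarrow> ('x, 'v, 'o) expr \<Rightarrow> ('x, 'v, 'o) fop" where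
  "lam_sym zs e = Lam (length zs) (nameless (rev zs) (Nabla e))"

fun tr :: "'x list \<Rightarrow> ('x, 'v, 'o) expr \<Rightarrow> ('x + 'v, ('x, 'v, 'o) fop) fexpr" where
  "tr ys (RVar x) = FV (Inl x)"
| "tr ys (FVar v) = FV (Inr v)"
| "tr ys (Op f es) = FOp (Orig f) (map (tr ys) es)"
| "tr ys (Eq a b) = FEq (tr ys a) (tr ys b)"
| "tr ys FalseE = FFalse"
| "tr ys (Imp a b) = FImp (tr ys a) (tr ys b)"
| "tr ys (All x e) = FAll (Inl x) (tr (x # ys) e)"
| "tr ys (Nabla e) =
     (let zs = filter (\<lambda>y. y \<in> frv e) ys in FOp (lam_sym zs e) (map (\<lambda>z. FV (Inl z)) zs))"

definition toFOL :: "('x, 'v, 'o) expr \<Rightarrow> ('x + 'v, ('x, 'v, 'o) fop) fexpr" where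
  "toFOL e = tr [] e"

end

theory Submission
  imports Defs
begin

text \<open>Every Kripke model and state w induce a first-order structure on the same universe:
  the original operators keep their meaning, the flexible variables take their values at w,
  and a fresh symbol [\<lambda>z. \<nabla>e] is interpreted as the value of \<nabla>e at w when z is bound to the
  arguments. By induction on expressions, the translation of e evaluates in this structure to
  the value of e at w. Hence any Kripke model satisfying \<Gamma> everywhere yields, at each state,
  a first-order model of the translated \<Gamma>, which then satisfies the translation of \<phi>.\<close>

fun dexp_val :: "'u \<Rightarrow> 'u \<Rightarrow> ('o \<Rightarrow> 'u list \<Rightarrow> 'u) \<Rightarrow> ('u set \<Rightarrow> 'u) \<Rightarrow> ('w \<times> 'w) set
    \<Rightarrow> ('x \<Rightarrow> 'u) \<Rightarrow> ('v \<Rightarrow> 'w \<Rightarrow> 'u) \<Rightarrow> 'u list \<Rightarrow> 'w \<Rightarrow> ('x, 'v, 'o) dexp \<Rightarrow> 'u" where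
  "dexp_val tt ff I nab R \<xi> \<zeta> env w (DBnd i) = env ! i"
| "dexp_val tt ff I nab R \<xi> \<zeta> env w (DRig x) = \<xi> x"
| "dexp_val tt ff I nab R \<xi> \<zeta> env w (DFlx v) = \<zeta> v w"
| "dexp_val tt ff I nab R \<xi> \<zeta> env w (DOp f es) = I f (map (dexp_val tt ff I nab R \<xi> \<zeta> env w) es)"
| "dexp_val tt ff I nab R \<xi> \<zeta> env w (DEq a b) =
     (if dexp_val tt ff I nab R \<xi> \<zeta> env w a = dexp_val tt ff I nab R \<xi> \<zeta> env w b then tt else ff)"
| "dexp_val tt ff I nab R \<xi> \<zeta> env w DFalse = ff"
| "dexp_val tt ff I nab R \<xi> \<zeta> env w (DImp a b) =
     (if dexp_val tt ff I nab R \<xi> \<zeta> env w a \<noteq> tt \<or> dexp_val tt ff I nab R \<xi> \<zeta> env w b = tt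
      then tt else ff)"
| "dexp_val tt ff I nab R \<xi> \<zeta> env w (DAll e) =
     (if \<forall>u. dexp_val tt ff I nab R \<xi> \<zeta> (u # env) w e = tt then tt else ff)"
| "dexp_val tt ff I nab R \<xi> \<zeta> env w (DNab e) =
     nab {dexp_val tt ff I nab R \<xi> \<zeta> env w' e | w'. (w, w') \<in> R}"

lemma nth_idx: "x \<in> set xs \<Longrightarrow> xs ! idx xs x = x"
  by (induction xs) auto

lemma idx_less_length: "x \<in> set xs \<Longrightarrow> idx xs x < length xs"
  by (induction xs) auto

lemma kval_eq_dexp_val_nameless:
  assumes "length vals = length env"
    and "\<forall>x\<in>frv e. \<xi> x = (if x \<in> set env then vals ! idx env x else \<xi>0 x)"
  shows "kval tt ff I nab R \<xi> \<zeta> w e = dexp_val tt ff I nab R \<xi>0 \<zeta> vals w (nameless env e)"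
  using assms
proof (induction e arbitrary: env vals \<xi> w)
  case (Op f es)
  then show ?case by (auto intro!: arg_cong[where f = "I f"])
next
  case (All x e)
  have "kval tt ff I nab R (\<xi>(x := u)) \<zeta> w e
      = dexp_val tt ff I nab R \<xi>0 \<zeta> (u # vals) w (nameless (x # env) e)" for u
    using All.prems by (intro All.IH) auto
  then show ?case by simp
qed auto

lemma kval_Nabla_eq_dexp_val_lambda:
  assumes "\<forall>x\<in>frv e. x \<notin> set zs \<longrightarrow> \<xi> x = \<xi>0 x"
  shows "kval tt ff I nab R \<xi> \<zeta> w (Nabla e)
       = dexp_val tt ff I nab R \<xi>0 \<zeta> (rev (map \<xi> zs)) w (nameless (rev zs) (Nabla e))"
proof (rule kval_eq_dexp_val_nameless)
  show "length (rev (map \<xi> zs)) = length (rev zs)" by simp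
  show "\<forall>x\<in>frv (Nabla e). \<xi> x = (if x \<in> set (rev zs) then rev (map \<xi> zs) ! idx (rev zs) x else \<xi>0 x)"
  proof
    fix x assume "x \<in> frv (Nabla e)"
    show "\<xi> x = (if x \<in> set (rev zs) then rev (map \<xi> zs) ! idx (rev zs) x else \<xi>0 x)"
    proof (cases "x \<in> set (rev zs)")
      case True
      then have "rev (map \<xi> zs) ! idx (rev zs) x = \<xi> (rev zs ! idx (rev zs) x)"
        using idx_less_length [OF True] by (simp add: rev_map)
      with True show ?thesis by (simp add: nth_idx)
    next
      case False
      with assms \<open>x \<in> frv (Nabla e)\<close> show ?thesis by simp
    qed
  qed
qed

text \<open>The arguments are reversed to match the environment rev zs used by lam_sym.\<close>

definition coalesce_interp :: "'u \<Rightarrow> 'u \<Rightarrow> ('o \<Rightarrow> 'u list \<Rightarrow> 'u) \<Rightarrow> ('u set \<Rightarrow> 'u)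
    \<Rightarrow> ('w \<times> 'w) set \<Rightarrow> ('x \<Rightarrow> 'u) \<Rightarrow> ('v \<Rightarrow> 'w \<Rightarrow> 'u) \<Rightarrow> 'w \<Rightarrow> ('x, 'v, 'o) fop \<Rightarrow> 'u list \<Rightarrow> 'u"
  where
  "coalesce_interp tt ff I nab R \<xi> \<zeta> w f args =
     (case f of
        Orig g \<Rightarrow> I g args
      | Lam n d \<Rightarrow> dexp_val tt ff I nab R \<xi> \<zeta> (rev args) w d)"

definition state_assignment :: "('x \<Rightarrow> 'u) \<Rightarrow> ('v \<Rightarrow> 'w \<Rightarrow> 'u) \<Rightarrow> 'w \<Rightarrow> 'x + 'v \<Rightarrow> 'u" where
  "state_assignment \<xi> \<zeta> w = case_sum \<xi> (\<lambda>v. \<zeta> v w)"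

lemma state_assignment_upd_Inl:
  "(state_assignment \<xi> \<zeta> w)(Inl x := u) = state_assignment (\<xi>(x := u)) \<zeta> w"
  by (rule ext) (auto simp: state_assignment_def split: sum.split)

text \<open>The fresh symbols are interpreted with the rigid valuation \<xi>0; this agrees with \<xi>
  outside ys, the rigid variables bound above the current position.\<close>

lemma fval_tr:
  assumes "\<forall>x. x \<notin> set ys \<longrightarrow> \<xi> x = \<xi>0 x"
  shows "fval tt ff (coalesce_interp tt ff I nab R \<xi>0 \<zeta> w) (state_assignment \<xi> \<zeta> w) (tr ys e)
       = kval tt ff I nab R \<xi> \<zeta> w e"
  using assms
proof (induction e arbitrary: ys \<xi>)
  case (Op f es)
  then show ?case by (auto simp: coalesce_interp_def intro!: arg_cong[where f = "I f"])
next
  case (All x e)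
  have "fval tt ff (coalesce_interp tt ff I nab R \<xi>0 \<zeta> w) (state_assignment (\<xi>(x := u)) \<zeta> w)
          (tr (x # ys) e)
      = kval tt ff I nab R (\<xi>(x := u)) \<zeta> w e" for u
    using All.prems by (intro All.IH) auto
  then show ?case by (simp add: state_assignment_upd_Inl)
next
  case (Nabla e)
  define zs where "zs = filter (\<lambda>y. y \<in> frv e) ys"
  have "\<forall>x\<in>frv e. x \<notin> set zs \<longrightarrow> \<xi> x = \<xi>0 x"
    using Nabla.prems by (auto simp: zs_def)
  then have "kval tt ff I nab R \<xi> \<zeta> w (Nabla e)
      = dexp_val tt ff I nab R \<xi>0 \<zeta> (rev (map \<xi> zs)) w (nameless (rev zs) (Nabla e))"
    by (rule kval_Nabla_eq_dexp_val_lambda)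
  then show ?case
    by (simp add: zs_def [symmetric] lam_sym_def coalesce_interp_def state_assignment_def comp_def
        del: nameless.simps)
qed (auto simp: state_assignment_def)

lemma fval_toFOL:
  "fval tt ff (coalesce_interp tt ff I nab R \<xi> \<zeta> w) (state_assignment \<xi> \<zeta> w) (toFOL e)
   = kval tt ff I nab R \<xi> \<zeta> w e"
  unfolding toFOL_def by (rule fval_tr) simp

theorem theorem1:
  fixes ar :: "'o::{countable,infinite} \<Rightarrow> nat"
    and \<Gamma> :: "('x::{countable,infinite}, 'v::{countable,infinite}, 'o) expr set"
    and \<phi> :: "('x, 'v, 'o) expr"
  assumes "\<forall>\<psi>\<in>\<Gamma>. wf ar \<psi>"
    and "wf ar \<phi>"
    and "fol_conseq TYPE('u) (toFOL ` \<Gamma>) (toFOL \<phi>)"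
  shows "kconseq TYPE('u) TYPE('w) \<Gamma> \<phi>"
  unfolding kconseq_def
proof (intro allI impI ballI)
  fix tt ff :: 'u and I nab and W :: "'w set" and R \<xi> \<zeta> w
  assume "kripke_model tt ff nab W R"
    and \<Gamma>_valid: "\<forall>\<psi>\<in>\<Gamma>. \<forall>w\<in>W. kval tt ff I nab R \<xi> \<zeta> w \<psi> = tt"
    and "w \<in> W"
  then have "tt \<noteq> ff" by (simp add: kripke_model_def)
  moreover have "\<forall>\<psi>\<in>toFOL ` \<Gamma>.
      fval tt ff (coalesce_interp tt ff I nab R \<xi> \<zeta> w) (state_assignment \<xi> \<zeta> w) \<psi> = tt"
    using \<Gamma>_valid \<open>w \<in> W\<close> by (auto simp: fval_toFOL)
  ultimately have
    "fval tt ff (coalesce_interp tt ff I nab R \<xi> \<zeta> w) (state_assignment \<xi> \<zeta> w) (toFOL \<phi>) = tt"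
    using assms(3) unfolding fol_conseq_def by blast
  then show "kval tt ff I nab R \<xi> \<zeta> w \<phi> = tt" by (simp add: fval_toFOL)
qed

end
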